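(* Let $X$ be a real linear space, $T$ an infinite index set, and $f, f_t : X \to \overline{\mathbb{R}} := \mathbb{R}\cup\{\pm\infty\}$ ($t \in T$) convex proper functions. Let $M := \bigcap_{t\in T} \operatorname{dom} f_t$. Let $v:\mathbb{R}^T\to\overline{\mathbb{R}}$ be $v(y) := \inf\{f(x) : f_t(x)\le y_t \text{ for all } t\in T\}$, where $\mathbb{R}^T$ carries the product topology, and let $\overline{v}$ denote the lower semicontinuous hull of $v$, so that $\overline{v}(0_Y) = \sup_{V} \inf_{y\in V} v(y)$, the supremum being over all neighborhoods $V$ of the origin $0_Y$ of $\mathbb{R}^T$. Let $$\sup(D) := \sup_{\lambda\in\mathbb{R}_+^{(T)}} \inf_{x\in M}\Big(f(x)+\sum_{t\in T}\lambda_t f_t(x)\Big).$$ Assume that either $\overline{v}(0_Y)\neq+\infty$ or $\sup(D)\neq-\infty$. Then $$\sup(D) = \sup_{\varepsilon>0,\ H\in\mathcal{F}(T)} \ \inf_{x\in M}\{ f(x) : f_t(x)\le\varepsilon \text{ for all } t\in H\}.$$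
   Context: $\operatorname{dom} g := \{x : g(x)<+\infty\}$; a proper function never takes the value $-\infty$ and has nonempty domain. $\mathbb{R}^{(T)}$ is the space of functions $\lambda=(\lambda_t)_{t\in T}:T\to\mathbb{R}$ with finite support $\operatorname{supp}\lambda=\{t:\lambda_t\neq0\}$, and $\mathbb{R}^{(T)}_+$ its elements with all $\lambda_t\ge0$; $\sum_{t\in T}\lambda_t f_t(x)$ means $\sum_{t\in\operatorname{supp}\lambda}\lambda_t f_t(x)$ if $\lambda\ne 0$ and $0$ if $\lambda=0$. $\mathcal{F}(T)$ is the family of nonempty finite subsets of $T$. Conventions: $\inf\emptyset=+\infty$, $\sup\emptyset=-\infty$. *)

theory Defs
  imports "HOL-Analysis.Analysis"
begin

definition edom :: "('x \<Rightarrow> ereal) \<Rightarrow> 'x set" where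
  "edom g = {x. g x < \<infinity>}"

definition econvex :: "('x::real_vector \<Rightarrow> ereal) \<Rightarrow> bool" where
  "econvex g \<longleftrightarrow> convex {(x, r::real). g x \<le> ereal r}"

definition eproper :: "('x \<Rightarrow> ereal) \<Rightarrow> bool" where
  "eproper g \<longleftrightarrow> (\<forall>x. g x \<noteq> -\<infinity>) \<and> edom g \<noteq> {}"

definition fin_nonneg :: "('t \<Rightarrow> real) set" where
  "fin_nonneg = {lam. finite {t. lam t \<noteq> 0} \<and> (\<forall>t. 0 \<le> lam t)}"

definition valfun :: "('x \<Rightarrow> ereal) \<Rightarrow> ('t \<Rightarrow> 'x \<Rightarrow> ereal) \<Rightarrow> ('t \<Rightarrow> real) \<Rightarrow> ereal" where
  "valfun f ft y = (INF x \<in> {x. \<forall>t. ft t x \<le> ereal (y t)}. f x)"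

definition lsc_hull_at0 :: "(('t \<Rightarrow> real) \<Rightarrow> ereal) \<Rightarrow> ereal" where
  "lsc_hull_at0 v = (SUP V \<in> {V. \<exists>U. open U \<and> (\<lambda>_::'t. 0::real) \<in> U \<and> U \<subseteq> V}. INF y \<in> V. v y)"

definition dual_sup :: "('x \<Rightarrow> ereal) \<Rightarrow> ('t \<Rightarrow> 'x \<Rightarrow> ereal) \<Rightarrow> ereal" where
  "dual_sup f ft = (SUP lam \<in> fin_nonneg.
      INF x \<in> (\<Inter>t. edom (ft t)). f x + (\<Sum>t\<in>{t. lam t \<noteq> 0}. ereal (lam t) * ft t x))"

end

theory Submission
  imports Defs
begin

(* Weak duality: a multiplier lam costs at most eps * (sum of lam) at points that satisfy
   f_t <= eps on supp lam, so sup(D) is below the right-hand side.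
   Conversely fix eps > 0 and a finite H. If some x in M with f x < +inf satisfies f_t x < eps
   for t in H, it is a Slater point of the finite convex program "minimise f subject to
   f_t <= eps (t in H)", and finite-dimensional Lagrange duality, proved by induction on H from
   the case of one constraint, bounds the value of that program by sup(D). Otherwise v is +inf
   on the neighbourhood {y. y_t < eps for t in H} of 0, so the lsc hull is +inf at 0 and the
   hypothesis provides lam0 with finite dual value. The convex system f_t < eps (t in H) is then
   inconsistent on M, and a theorem of the alternative yields mu >= 0 with
   sum mu_t f_t >= eps there; the multipliers lam0 + k mu show sup(D) = +inf. *)

lemma convex_on_sublevel:
  assumes "convex_on C g"
  shows "convex {x \<in> C. g x \<le> a}"
proof (rule convexI, clarify)
  fix x y and u v :: real
  assume x: "x \<in> C" "g x \<le> a" and y: "y \<in> C" "g y \<le> a" and uv: "0 \<le> u" "0 \<le> v" "u + v = 1"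
  have "g (u *\<^sub>R x + v *\<^sub>R y) \<le> u * g x + v * g y"
    using assms x y uv by (auto simp: convex_on_def)
  also have "\<dots> \<le> u * a + v * a"
    using x y uv by (intro add_mono mult_left_mono) auto
  finally show "u *\<^sub>R x + v *\<^sub>R y \<in> C \<and> g (u *\<^sub>R x + v *\<^sub>R y) \<le> a"
    using convex_on_imp_convex[OF assms] x y uv by (simp add: convexD flip: distrib_right)
qed

lemma convex_on_nonneg_combination:
  assumes "finite H" "convex C"
    and "\<And>i. i \<in> H \<Longrightarrow> convex_on C (g i)" "\<And>i. i \<in> H \<Longrightarrow> 0 \<le> lam i"
  shows "convex_on C (\<lambda>x. \<Sum>i\<in>H. lam i * g i x)"
  using assms
  by (induction H rule: finite_induct) (simp_all add: convex_on_const convex_on_add convex_on_cmul)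

lemma convex_on_linear_compose:
  assumes "convex_on S h" "linear l" "convex A" "l ` A \<subseteq> S"
  shows "convex_on A (\<lambda>x. h (l x))"
proof (rule convex_onI[OF _ \<open>convex A\<close>])
  fix t :: real and x y assume "0 < t" "t < 1" "x \<in> A" "y \<in> A"
  then show "h (l ((1 - t) *\<^sub>R x + t *\<^sub>R y)) \<le> (1 - t) * h (l x) + t * h (l y)"
    using convex_onD[OF assms(1), of t "l x" "l y"] assms(4)
    by (auto simp: linear_add[OF assms(2)] linear_scale[OF assms(2)])
qed

lemma slater_multiplier:
  fixes C :: "'a::real_vector set" and phi g :: "'a \<Rightarrow> real"
  assumes convex_phi: "convex_on C phi" and convex_g: "convex_on C g"
    and slater: "x0 \<in> C" "g x0 < 0"
    and bound: "\<And>x. x \<in> C \<Longrightarrow> g x \<le> 0 \<Longrightarrow> \<alpha> \<le> phi x"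
  shows "\<exists>mu\<ge>0. \<forall>x\<in>C. \<alpha> \<le> phi x + mu * g x"
proof -
  (* z, the point of [x, y] where the chord of g vanishes, is feasible;
     mu will be the infimum of the right-hand slopes *)
  have slope_le: "(\<alpha> - phi x) / g x \<le> (phi y - \<alpha>) / (- g y)"
    if x: "x \<in> C" "g x > 0" and y: "y \<in> C" "g y < 0" for x y
  proof -
    define u where "u = g x / (g x - g y)"
    define z where "z = (1 - u) *\<^sub>R x + u *\<^sub>R y"
    have u: "0 \<le> u" "u \<le> 1" "1 - u = - g y / (g x - g y)"
      using x y by (simp_all add: u_def field_simps)
    have "z \<in> C"
      using convex_on_imp_convex[OF convex_g] x(1) y(1) u(1,2) unfolding z_def convex_alt by blast
    moreover have "g z \<le> 0"
    proof -
      have "g z \<le> (1 - u) * g x + u * g y"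
        using convex_onD[OF convex_g u(1,2) x(1) y(1)] by (simp add: z_def)
      also have "\<dots> = 0"
        using x y by (simp add: u(3) u_def field_simps)
      finally show ?thesis .
    qed
    ultimately have "\<alpha> \<le> phi z" by (rule bound)
    also have "phi z \<le> (1 - u) * phi x + u * phi y"
      using convex_onD[OF convex_phi u(1,2) x(1) y(1)] by (simp add: z_def)
    finally have "\<alpha> \<le> (- g y * phi x + g x * phi y) / (g x - g y)"
      by (simp only: u(3)) (simp add: u_def add_divide_distrib diff_divide_distrib)
    then have "\<alpha> * (g x - g y) \<le> - g y * phi x + g x * phi y"
      using x y by (simp add: pos_le_divide_eq)
    then show ?thesis
      using x y by (simp add: field_simps)
  qed
  define B where "B = (\<lambda>y. (phi y - \<alpha>) / (- g y)) ` {y \<in> C. g y < 0}"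
  define mu where "mu = Inf B"
  have "B \<noteq> {}" using slater by (auto simp: B_def)
  have B_nonneg: "0 \<le> b" if "b \<in> B" for b
    using that bound by (force simp: B_def intro: divide_nonneg_neg)
  then have "bdd_below B" by (auto simp: bdd_below_def)
  have "0 \<le> mu"
    unfolding mu_def using \<open>B \<noteq> {}\<close> B_nonneg by (intro cInf_greatest) auto
  moreover have "\<alpha> \<le> phi x + mu * g x" if x: "x \<in> C" for x
  proof (cases "g x" "0::real" rule: linorder_cases)
    case less
    then have "mu \<le> (phi x - \<alpha>) / (- g x)"
      unfolding mu_def using \<open>bdd_below B\<close> x by (intro cInf_lower) (auto simp: B_def)
    then show ?thesis using less by (simp add: field_simps)
  next
    case equal
    then show ?thesis using bound x by simp
  next
    case greater
    have "(\<alpha> - phi x) / g x \<le> mu"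
      unfolding mu_def using \<open>B \<noteq> {}\<close> slope_le[OF x greater] by (intro cInf_greatest) (auto simp: B_def)
    then show ?thesis using greater by (simp add: field_simps)
  qed
  ultimately show ?thesis by blast
qed

lemma slater_multipliers:
  fixes C :: "'a::real_vector set" and phi :: "'a \<Rightarrow> real" and g :: "'i \<Rightarrow> 'a \<Rightarrow> real"
  assumes "finite H"
    and "convex_on C phi" and "\<And>i. i \<in> H \<Longrightarrow> convex_on C (g i)"
    and "x0 \<in> C" and "\<And>i. i \<in> H \<Longrightarrow> g i x0 < 0"
    and "\<And>x. x \<in> C \<Longrightarrow> \<forall>i\<in>H. g i x \<le> 0 \<Longrightarrow> \<alpha> \<le> phi x"
  shows "\<exists>lam. (\<forall>i\<in>H. 0 \<le> lam i) \<and> (\<forall>x\<in>C. \<alpha> \<le> phi x + (\<Sum>i\<in>H. lam i * g i x))"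
  using assms
proof (induction H arbitrary: C phi rule: finite_induct)
  case empty
  then show ?case by auto
next
  case (insert j H)
  define C' where "C' = {x \<in> C. g j x \<le> 0}"
  have "convex C'"
    unfolding C'_def using insert.prems(2) by (simp add: convex_on_sublevel)
  have "C' \<subseteq> C" by (auto simp: C'_def)
  have "\<exists>lam. (\<forall>i\<in>H. 0 \<le> lam i) \<and> (\<forall>x\<in>C'. \<alpha> \<le> phi x + (\<Sum>i\<in>H. lam i * g i x))"
  proof (rule insert.IH)
    show "convex_on C' phi" "\<And>i. i \<in> H \<Longrightarrow> convex_on C' (g i)"
      using insert.prems(1,2) convex_on_subset[OF _ \<open>C' \<subseteq> C\<close> \<open>convex C'\<close>] by auto
    show "x0 \<in> C'"
      using insert.prems(3) insert.prems(4)[of j] by (simp add: C'_def)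
  qed (use insert.prems in \<open>auto simp: C'_def\<close>)
  then obtain lam where lam: "\<forall>i\<in>H. 0 \<le> lam i" "\<forall>x\<in>C'. \<alpha> \<le> phi x + (\<Sum>i\<in>H. lam i * g i x)"
    by blast
  define psi where "psi = (\<lambda>x. phi x + (\<Sum>i\<in>H. lam i * g i x))"
  have "convex_on C psi"
    unfolding psi_def using insert lam(1) convex_on_imp_convex
    by (intro convex_on_add convex_on_nonneg_combination) auto
  then obtain mu where mu: "0 \<le> mu" "\<forall>x\<in>C. \<alpha> \<le> psi x + mu * g j x"
    using slater_multiplier[of C psi "g j" x0 \<alpha>] insert.prems lam(2) by (auto simp: C'_def psi_def)
  have "(\<Sum>i\<in>H. (lam(j := mu)) i * g i x) = (\<Sum>i\<in>H. lam i * g i x)" for x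
    using insert.hyps by (intro sum.cong) auto
  then show ?case
    using insert.hyps lam(1) mu by (intro exI[of _ "lam(j := mu)"]) (auto simp: psi_def algebra_simps)
qed

lemma inconsistent_convex_system_multipliers:
  fixes C :: "'a::real_vector set" and g :: "'i \<Rightarrow> 'a \<Rightarrow> real"
  assumes "finite H" "convex C" "\<And>i. i \<in> H \<Longrightarrow> convex_on C (g i)"
    and infeasible: "\<And>x. x \<in> C \<Longrightarrow> \<exists>i\<in>H. \<delta> \<le> g i x"
  shows "\<exists>mu. (\<forall>i\<in>H. 0 \<le> mu i) \<and> (\<forall>x\<in>C. \<delta> \<le> (\<Sum>i\<in>H. mu i * g i x))"
proof (cases "C = {}")
  case False
  then obtain x1 where "x1 \<in> C" by blast
  (* minimise s subject to g i x \<le> s on C \<times> UNIV: every feasible s is at least \<delta>;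
     then evaluate the multiplier bound at s = 0 *)
  define s1 where "s1 = (\<Sum>i\<in>H. \<bar>g i x1\<bar>) + 1"
  have convex_CR: "convex (C \<times> (UNIV :: real set))"
    using \<open>convex C\<close> by (simp add: convex_Times)
  have "\<exists>mu. (\<forall>i\<in>H. 0 \<le> mu i) \<and>
    (\<forall>z\<in>C \<times> UNIV. \<delta> \<le> snd z + (\<Sum>i\<in>H. mu i * (g i (fst z) - snd z)))"
  proof (rule slater_multipliers[OF \<open>finite H\<close>])
    show "convex_on (C \<times> UNIV) snd"
      using convex_on_linear_compose[of UNIV "\<lambda>s. s" snd] convex_CR
      by (simp add: convex_on_ident linear_snd)
    show "convex_on (C \<times> UNIV) (\<lambda>z. g i (fst z) - snd z)" if "i \<in> H" for i
    proof (rule convex_on_diff)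
      show "convex_on (C \<times> (UNIV :: real set)) (\<lambda>z. g i (fst z))"
        using convex_on_linear_compose[OF assms(3)[OF that] linear_fst convex_CR] by auto
      show "concave_on (C \<times> UNIV) snd"
        using convex_CR by (simp add: concave_on_iff)
    qed
    show "(x1, s1) \<in> C \<times> UNIV"
      using \<open>x1 \<in> C\<close> by simp
    show "g i (fst (x1, s1)) - snd (x1, s1) < 0" if "i \<in> H" for i
    proof -
      have "g i x1 \<le> \<bar>g i x1\<bar>" by simp
      also have "\<dots> \<le> (\<Sum>i\<in>H. \<bar>g i x1\<bar>)"
        using \<open>finite H\<close> that by (intro member_le_sum) auto
      finally show ?thesis by (simp add: s1_def)
    qed
    show "\<delta> \<le> snd z" if "z \<in> C \<times> UNIV" "\<forall>i\<in>H. g i (fst z) - snd z \<le> 0" for z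
      using infeasible[of "fst z"] that by force
  qed
  then obtain mu where mu_nonneg: "\<forall>i\<in>H. 0 \<le> mu i"
    and mu: "\<forall>z\<in>C \<times> UNIV. \<delta> \<le> snd z + (\<Sum>i\<in>H. mu i * (g i (fst z) - snd z))"
    by blast
  have "\<delta> \<le> (\<Sum>i\<in>H. mu i * g i x)" if "x \<in> C" for x
    using mu[rule_format, of "(x, 0)"] that by simp
  with mu_nonneg show ?thesis by blast
qed auto

lemma econvexD:
  assumes "econvex g" "g x \<le> ereal a" "g y \<le> ereal b" "0 \<le> u" "u \<le> 1"
  shows "g ((1 - u) *\<^sub>R x + u *\<^sub>R y) \<le> ereal ((1 - u) * a + u * b)"
proof -
  have "(1 - u) *\<^sub>R (x, a) + u *\<^sub>R (y, b) \<in> {(x, r). g x \<le> ereal r}"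
    using assms unfolding econvex_def by (intro convexD_alt) auto
  then show ?thesis by simp
qed

lemma convex_edom:
  assumes "econvex g"
  shows "convex (edom g)"
proof (rule convexI)
  fix x y and u v :: real
  assume "x \<in> edom g" "y \<in> edom g" "0 \<le> u" "0 \<le> v" "u + v = 1"
  then obtain a b where "g x \<le> ereal a" "g y \<le> ereal b"
    unfolding edom_def by (metis less_PInf_Ex_of_nat less_imp_le mem_Collect_eq less_irrefl)
  moreover have "u = 1 - v"
    using \<open>u + v = 1\<close> by simp
  ultimately have "g (u *\<^sub>R x + v *\<^sub>R y) \<le> ereal (u * a + v * b)"
    using econvexD[OF assms, of x a y b v] \<open>0 \<le> u\<close> \<open>0 \<le> v\<close> by simp
  then show "u *\<^sub>R x + v *\<^sub>R y \<in> edom g"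
    unfolding edom_def by (cases "g (u *\<^sub>R x + v *\<^sub>R y)") auto
qed

lemma econvex_imp_convex_on:
  fixes g :: "'a::real_vector \<Rightarrow> ereal"
  assumes "econvex g" "convex C" "\<And>x. x \<in> C \<Longrightarrow> \<bar>g x\<bar> \<noteq> \<infinity>"
  shows "convex_on C (\<lambda>x. real_of_ereal (g x))"
proof (rule convex_onI[OF _ \<open>convex C\<close>])
  fix u :: real and x y :: 'a
  assume xy: "0 < u" "u < 1" "x \<in> C" "y \<in> C"
  let ?z = "(1 - u) *\<^sub>R x + u *\<^sub>R y"
  have "?z \<in> C"
    using \<open>convex C\<close> xy by (simp add: convexD_alt)
  have "g ?z \<le> ereal ((1 - u) * real_of_ereal (g x) + u * real_of_ereal (g y))"
    using xy assms(3) by (intro econvexD[OF assms(1)]) (auto simp: ereal_real)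
  then show "real_of_ereal (g ?z) \<le> (1 - u) * real_of_ereal (g x) + u * real_of_ereal (g y)"
    using assms(3)[OF \<open>?z \<in> C\<close>] by (cases "g ?z") auto
qed

definition lagrangian ::
  "('x \<Rightarrow> ereal) \<Rightarrow> ('t \<Rightarrow> 'x \<Rightarrow> ereal) \<Rightarrow> ('t \<Rightarrow> real) \<Rightarrow> 'x \<Rightarrow> ereal" where
  "lagrangian f ft lam x = f x + (\<Sum>t\<in>{t. lam t \<noteq> 0}. ereal (lam t) * ft t x)"

definition relaxed_value ::
  "('x \<Rightarrow> ereal) \<Rightarrow> ('t \<Rightarrow> 'x \<Rightarrow> ereal) \<Rightarrow> real \<Rightarrow> 't set \<Rightarrow> ereal" where
  "relaxed_value f ft eps H = (INF x \<in> {x \<in> (\<Inter>t. edom (ft t)). \<forall>t\<in>H. ft t x \<le> ereal eps}. f x)"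

lemma dual_sup_eq_SUP_lagrangian:
  "dual_sup f ft = (SUP lam \<in> fin_nonneg. INF x \<in> (\<Inter>t. edom (ft t)). lagrangian f ft lam x)"
  by (simp add: dual_sup_def lagrangian_def)

lemma lagrangian_le_of_feasible:
  assumes "\<And>t. 0 \<le> lam t" and "\<And>t. lam t \<noteq> 0 \<Longrightarrow> ft t x \<le> ereal eps"
  shows "lagrangian f ft lam x \<le> f x + ereal (eps * (\<Sum>t\<in>{t. lam t \<noteq> 0}. lam t))"
proof -
  have "ereal (lam t) * ft t x \<le> ereal (lam t * eps)" if "lam t \<noteq> 0" for t
    using ereal_mult_left_mono[OF assms(2)[OF that], of "ereal (lam t)"] assms(1)[of t] by simp
  then have "(\<Sum>t\<in>{t. lam t \<noteq> 0}. ereal (lam t) * ft t x)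
      \<le> (\<Sum>t\<in>{t. lam t \<noteq> 0}. ereal (lam t * eps))"
    by (intro sum_mono) auto
  also have "\<dots> = ereal (eps * (\<Sum>t\<in>{t. lam t \<noteq> 0}. lam t))"
    by (simp add: sum_distrib_left mult.commute)
  finally show ?thesis
    unfolding lagrangian_def by (rule add_left_mono)
qed

lemma dual_sup_le_SUP_relaxed_value:
  fixes f :: "'x \<Rightarrow> ereal" and ft :: "'t \<Rightarrow> 'x \<Rightarrow> ereal"
  shows "dual_sup f ft \<le>
    (SUP p \<in> {p. 0 < fst p \<and> finite (snd p) \<and> snd p \<noteq> {}}. relaxed_value f ft (fst p) (snd p))"
    (is "_ \<le> ?R")
  unfolding dual_sup_eq_SUP_lagrangian
proof (rule SUP_least)
  fix lam :: "'t \<Rightarrow> real"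
  assume "lam \<in> fin_nonneg"
  define S where "S = {t. lam t \<noteq> 0}"
  (* any index makes H nonempty *)
  define H where "H = insert undefined S"
  define s where "s = (\<Sum>t\<in>S. lam t)"
  have "finite S" and lam_nonneg: "\<And>t. 0 \<le> lam t"
    using \<open>lam \<in> fin_nonneg\<close> by (auto simp: fin_nonneg_def S_def)
  then have "0 \<le> s"
    by (simp add: s_def sum_nonneg)
  show "(INF x \<in> (\<Inter>t. edom (ft t)). lagrangian f ft lam x) \<le> ?R"
  proof (rule ereal_le_epsilon2)
    fix e :: real
    assume "0 < e"
    define eps where "eps = e / (s + 1)"
    have "0 < eps" "eps * s \<le> e"
      using \<open>0 < e\<close> \<open>0 \<le> s\<close> by (auto simp: eps_def field_simps)
    have "(INF x \<in> (\<Inter>t. edom (ft t)). lagrangian f ft lam x) - ereal e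
        \<le> relaxed_value f ft eps H"
      unfolding relaxed_value_def
    proof (rule INF_greatest)
      fix x
      assume x: "x \<in> {x \<in> (\<Inter>t. edom (ft t)). \<forall>t\<in>H. ft t x \<le> ereal eps}"
      then have "(INF x \<in> (\<Inter>t. edom (ft t)). lagrangian f ft lam x) \<le> lagrangian f ft lam x"
        by (intro INF_lower) simp
      also have "\<dots> \<le> f x + ereal (eps * s)"
        using x lam_nonneg unfolding s_def S_def H_def by (intro lagrangian_le_of_feasible) auto
      also have "\<dots> \<le> f x + ereal e"
        using \<open>eps * s \<le> e\<close> by (intro add_left_mono) simp
      finally show "(INF x \<in> (\<Inter>t. edom (ft t)). lagrangian f ft lam x) - ereal e \<le> f x"
        by (simp add: ereal_minus_le)
    qed
    also have "\<dots> \<le> ?R"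
      using \<open>0 < eps\<close> \<open>finite S\<close> by (intro SUP_upper2[of "(eps, H)"]) (auto simp: H_def)
    finally show "(INF x \<in> (\<Inter>t. edom (ft t)). lagrangian f ft lam x) \<le> ?R + ereal e"
      by (simp add: ereal_minus_le)
  qed
qed

locale convex_program =
  fixes f :: "'x::real_vector \<Rightarrow> ereal" and ft :: "'t \<Rightarrow> 'x \<Rightarrow> ereal"
  assumes econvex_f: "econvex f" and econvex_ft: "\<And>t. econvex (ft t)"
    and f_not_MInfty: "\<And>x. f x \<noteq> -\<infinity>" and ft_not_MInfty: "\<And>t x. ft t x \<noteq> -\<infinity>"
begin

abbreviation M :: "'x set" where
  "M \<equiv> \<Inter>t. edom (ft t)"

abbreviation C :: "'x set" where
  "C \<equiv> M \<inter> edom f"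

(* real_of_ereal sends +-inf to 0; f_real and ft_real are only used on C and M, where f resp.
   every ft t is finite. *)
abbreviation f_real :: "'x \<Rightarrow> real" where
  "f_real x \<equiv> real_of_ereal (f x)"

abbreviation ft_real :: "'t \<Rightarrow> 'x \<Rightarrow> real" where
  "ft_real t x \<equiv> real_of_ereal (ft t x)"

lemma ft_finite: "x \<in> M \<Longrightarrow> \<bar>ft t x\<bar> \<noteq> \<infinity>"
  using ft_not_MInfty[of t x] by (cases "ft t x") (auto simp: edom_def)

lemma f_finite: "x \<in> C \<Longrightarrow> \<bar>f x\<bar> \<noteq> \<infinity>"
  using f_not_MInfty[of x] by (cases "f x") (auto simp: edom_def)

lemma convex_C: "convex C"
  using convex_edom econvex_f econvex_ft by (intro convex_Int convex_INT) auto

lemma convex_on_f_real: "convex_on C f_real"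
  using convex_C f_finite by (intro econvex_imp_convex_on[OF econvex_f]) auto

lemma convex_on_ft_real: "convex_on C (ft_real t)"
  using convex_C ft_finite by (intro econvex_imp_convex_on[OF econvex_ft]) auto

lemma lagrangian_eq:
  assumes "x \<in> M"
  shows "lagrangian f ft lam x = f x + ereal (\<Sum>t\<in>{t. lam t \<noteq> 0}. lam t * ft_real t x)"
proof -
  have "ereal (lam t) * ft t x = ereal (lam t * ft_real t x)" for t
    using ft_finite[OF assms, of t] by (cases "ft t x") auto
  then show ?thesis
    by (simp add: lagrangian_def)
qed

lemma lagrangian_eq_real:
  assumes "x \<in> C" "finite S" "{t. lam t \<noteq> 0} \<subseteq> S"
  shows "lagrangian f ft lam x = ereal (f_real x + (\<Sum>t\<in>S. lam t * ft_real t x))"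
proof -
  have "(\<Sum>t\<in>{t. lam t \<noteq> 0}. lam t * ft_real t x) = (\<Sum>t\<in>S. lam t * ft_real t x)"
    using assms(2,3) by (intro sum.mono_neutral_left) auto
  then show ?thesis
    using assms(1) f_finite[OF assms(1)] by (cases "f x") (simp_all add: lagrangian_eq)
qed

lemma dual_sup_lower_bound:
  assumes "finite H" "\<And>t. t \<in> H \<Longrightarrow> 0 \<le> lam t"
    and bound: "\<And>x. x \<in> C \<Longrightarrow> a \<le> f_real x + (\<Sum>t\<in>H. lam t * ft_real t x)"
  shows "ereal a \<le> dual_sup f ft"
proof -
  define lam' where "lam' t = (if t \<in> H then lam t else 0)" for t
  have supp: "{t. lam' t \<noteq> 0} \<subseteq> H"
    by (auto simp: lam'_def)
  have "lam' \<in> fin_nonneg"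
    using assms(1,2) finite_subset[OF supp] by (auto simp: fin_nonneg_def lam'_def)
  have "ereal a \<le> lagrangian f ft lam' x" if "x \<in> M" for x
  proof (cases "x \<in> edom f")
    case True
    have "(\<Sum>t\<in>H. lam' t * ft_real t x) = (\<Sum>t\<in>H. lam t * ft_real t x)"
      by (simp add: lam'_def)
    then show ?thesis
      using that True bound lagrangian_eq_real[OF _ \<open>finite H\<close> supp] by simp
  next
    case False
    then show ?thesis
      using that by (simp add: lagrangian_eq edom_def)
  qed
  then have "ereal a \<le> (INF x \<in> M. lagrangian f ft lam' x)"
    by (rule INF_greatest)
  also have "\<dots> \<le> dual_sup f ft"
    unfolding dual_sup_eq_SUP_lagrangian using \<open>lam' \<in> fin_nonneg\<close> by (rule SUP_upper)
  finally show ?thesis .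
qed

lemma ft_le_ereal_iff: "x \<in> M \<Longrightarrow> ft t x \<le> ereal r \<longleftrightarrow> ft_real t x \<le> r"
  using ft_finite[of x t] by (cases "ft t x") auto

lemma relaxed_value_le_dual_sup_slater:
  assumes "finite H" "0 \<le> eps" and slater: "x1 \<in> C" "\<forall>t\<in>H. ft_real t x1 < eps"
  shows "relaxed_value f ft eps H \<le> dual_sup f ft"
proof (cases "relaxed_value f ft eps H = -\<infinity>")
  case False
  have feasible: "relaxed_value f ft eps H \<le> f x" if "x \<in> C" "\<forall>t\<in>H. ft_real t x \<le> eps" for x
    unfolding relaxed_value_def using that ft_le_ereal_iff by (intro INF_lower) blast
  have "relaxed_value f ft eps H \<le> f x1"
    using slater by (intro feasible) auto
  also have "f x1 < \<infinity>"
    using slater by (simp add: edom_def)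
  finally obtain \<alpha> where \<alpha>: "relaxed_value f ft eps H = ereal \<alpha>"
    using False by (cases "relaxed_value f ft eps H") auto
  have "\<exists>lam. (\<forall>t\<in>H. 0 \<le> lam t) \<and>
      (\<forall>x\<in>C. \<alpha> \<le> f_real x + (\<Sum>t\<in>H. lam t * (ft_real t x - eps)))"
  proof (rule slater_multipliers[OF \<open>finite H\<close> convex_on_f_real])
    show "convex_on C (\<lambda>x. ft_real t x - eps)" for t
      by (intro convex_on_diff convex_on_ft_real) (simp add: concave_on_const convex_C)
    show "\<alpha> \<le> f_real x" if "x \<in> C" "\<forall>t\<in>H. ft_real t x - eps \<le> 0" for x
    proof -
      have "ereal \<alpha> \<le> f x"
        using feasible[of x] that \<alpha> by simp
      then show ?thesis
        using f_finite[OF that(1)] by (cases "f x") auto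
    qed
    show "x1 \<in> C"
      using slater(1) .
    show "ft_real t x1 - eps < 0" if "t \<in> H" for t
      using slater(2) that by simp
  qed
  then obtain lam where lam: "\<forall>t\<in>H. 0 \<le> lam t"
    and bound: "\<forall>x\<in>C. \<alpha> \<le> f_real x + (\<Sum>t\<in>H. lam t * (ft_real t x - eps))"
    by blast
  have "\<alpha> \<le> f_real x + (\<Sum>t\<in>H. lam t * ft_real t x)" if "x \<in> C" for x
  proof -
    have "(\<Sum>t\<in>H. lam t * (ft_real t x - eps)) \<le> (\<Sum>t\<in>H. lam t * ft_real t x)"
      using lam \<open>0 \<le> eps\<close> by (intro sum_mono mult_left_mono) auto
    then show ?thesis
      using bound that by force
  qed
  then have "ereal \<alpha> \<le> dual_sup f ft"
    using lam by (intro dual_sup_lower_bound[OF \<open>finite H\<close>, where lam = lam]) auto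
  then show ?thesis
    by (simp add: \<alpha>)
qed simp

lemma lsc_hull_eq_infinity:
  assumes "finite H" "0 < eps" and infeasible: "\<forall>x\<in>C. \<exists>t\<in>H. eps \<le> ft_real t x"
  shows "lsc_hull_at0 (valfun f ft) = \<infinity>"
proof -
  define U where "U = (\<Inter>t\<in>H. {y :: 't \<Rightarrow> real. y t < eps})"
  have "open U"
    unfolding U_def using \<open>finite H\<close>
    by (intro open_INT ballI open_Collect_less continuous_on_product_coordinates continuous_on_const) auto
  moreover have "(\<lambda>_. 0) \<in> U"
    using \<open>0 < eps\<close> by (simp add: U_def)
  ultimately have "(INF y \<in> U. valfun f ft y) \<le> lsc_hull_at0 (valfun f ft)"
    unfolding lsc_hull_at0_def by (intro SUP_upper) auto
  moreover have "f x = \<infinity>" if "y \<in> U" "\<forall>t. ft t x \<le> ereal (y t)" for x y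
  proof -
    have "ft t x < \<infinity>" for t
      using that(2)[rule_format, of t] by (cases "ft t x") auto
    then have "x \<in> M"
      by (simp add: edom_def)
    have "x \<notin> edom f"
    proof
      assume "x \<in> edom f"
      then obtain t where "t \<in> H" "eps \<le> ft_real t x"
        using infeasible \<open>x \<in> M\<close> by blast
      moreover have "ft_real t x \<le> y t"
        using that(2) \<open>x \<in> M\<close> ft_le_ereal_iff by blast
      moreover have "y t < eps"
        using \<open>y \<in> U\<close> \<open>t \<in> H\<close> by (simp add: U_def)
      ultimately show False
        by linarith
    qed
    then show ?thesis
      by (simp add: edom_def)
  qed
  then have "(INF y \<in> U. valfun f ft y) = \<infinity>"
    unfolding valfun_def by (simp flip: top_ereal_def)
  ultimately show ?thesis
    by simp
qed

lemma dual_sup_eq_infinity: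
  assumes "finite H" "0 < eps" and infeasible: "\<forall>x\<in>C. \<exists>t\<in>H. eps \<le> ft_real t x"
    and "dual_sup f ft \<noteq> -\<infinity>"
  shows "dual_sup f ft = \<infinity>"
proof -
  have "\<exists>lam\<in>fin_nonneg. (INF x \<in> M. lagrangian f ft lam x) \<noteq> -\<infinity>"
  proof (rule ccontr)
    assume "\<not> ?thesis"
    then have "dual_sup f ft \<le> -\<infinity>"
      unfolding dual_sup_eq_SUP_lagrangian by (intro SUP_least) auto
    then show False
      using assms(4) by simp
  qed
  then obtain lam0 b where "lam0 \<in> fin_nonneg" "b > -\<infinity>" "\<forall>x\<in>M. b \<le> lagrangian f ft lam0 x"
    by (auto simp: INF_eq_minf)
  moreover obtain c where "ereal c \<le> b"
    using \<open>b > -\<infinity>\<close> by (cases b) auto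
  ultimately have c: "ereal c \<le> lagrangian f ft lam0 x" if "x \<in> M" for x
    using that order_trans by blast
  define S where "S = {t. lam0 t \<noteq> 0} \<union> H"
  have "finite S"
    using \<open>lam0 \<in> fin_nonneg\<close> \<open>finite H\<close> by (simp add: S_def fin_nonneg_def)
  have "\<exists>mu. (\<forall>t\<in>S. 0 \<le> mu t) \<and> (\<forall>x\<in>C. eps \<le> (\<Sum>t\<in>S. mu t * ft_real t x))"
    by (rule inconsistent_convex_system_multipliers[OF \<open>finite S\<close> convex_C convex_on_ft_real])
      (use infeasible in \<open>auto simp: S_def\<close>)
  then obtain mu where mu_nonneg: "\<forall>t\<in>S. 0 \<le> mu t"
    and mu: "\<forall>x\<in>C. eps \<le> (\<Sum>t\<in>S. mu t * ft_real t x)"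
    by blast
  show ?thesis
  proof (rule ereal_top)
    fix N :: real
    (* adding k mu to lam0 raises the lower bound c by at least k eps *)
    define k where "k = max 0 ((N - c) / eps)"
    have "0 \<le> k" "(N - c) / eps \<le> k"
      by (simp_all add: k_def)
    then have "N - c \<le> k * eps"
      using \<open>0 < eps\<close> by (simp add: pos_divide_le_eq)
    show "ereal N \<le> dual_sup f ft"
    proof (rule dual_sup_lower_bound[OF \<open>finite S\<close>])
      show "0 \<le> lam0 t + k * mu t" if "t \<in> S" for t
        using that \<open>lam0 \<in> fin_nonneg\<close> mu_nonneg \<open>0 \<le> k\<close> by (simp add: fin_nonneg_def)
      show "N \<le> f_real x + (\<Sum>t\<in>S. (lam0 t + k * mu t) * ft_real t x)" if "x \<in> C" for x
      proof -
        have "c \<le> f_real x + (\<Sum>t\<in>S. lam0 t * ft_real t x)"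
          using c[of x] that lagrangian_eq_real[OF that \<open>finite S\<close>, of lam0] by (auto simp: S_def)
        moreover have "k * eps \<le> k * (\<Sum>t\<in>S. mu t * ft_real t x)"
          using mu that \<open>0 \<le> k\<close> by (simp add: mult_left_mono)
        moreover have "(\<Sum>t\<in>S. (lam0 t + k * mu t) * ft_real t x)
            = (\<Sum>t\<in>S. lam0 t * ft_real t x) + k * (\<Sum>t\<in>S. mu t * ft_real t x)"
          by (simp add: distrib_right sum.distrib sum_distrib_left mult.assoc)
        ultimately show ?thesis
          using \<open>N - c \<le> k * eps\<close> by linarith
      qed
    qed
  qed
qed

lemma relaxed_value_le_dual_sup:
  assumes "lsc_hull_at0 (valfun f ft) \<noteq> \<infinity> \<or> dual_sup f ft \<noteq> -\<infinity>" "0 < eps" "finite H"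
  shows "relaxed_value f ft eps H \<le> dual_sup f ft"
proof (cases "\<exists>x\<in>C. \<forall>t\<in>H. ft_real t x < eps")
  case True
  then show ?thesis
    using assms(2,3) relaxed_value_le_dual_sup_slater by auto
next
  case False
  then have infeasible: "\<forall>x\<in>C. \<exists>t\<in>H. eps \<le> ft_real t x"
    by (auto simp: not_less)
  then have "dual_sup f ft \<noteq> -\<infinity>"
    using assms lsc_hull_eq_infinity by auto
  then show ?thesis
    using assms(2,3) infeasible dual_sup_eq_infinity by simp
qed

end

theorem proposition2p1:
  fixes f :: "'x::real_vector \<Rightarrow> ereal"
    and ft :: "'t \<Rightarrow> 'x \<Rightarrow> ereal"
  assumes T_inf: "infinite (UNIV :: 't set)"
    and f_cvx: "econvex f" and f_prop: "eproper f"
    and ft_cvx: "\<And>t. econvex (ft t)" and ft_prop: "\<And>t. eproper (ft t)"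
    and alt: "lsc_hull_at0 (valfun f ft) \<noteq> \<infinity> \<or> dual_sup f ft \<noteq> -\<infinity>"
  shows "dual_sup f ft =
    (SUP p \<in> {p :: real \<times> 't set. 0 < fst p \<and> finite (snd p) \<and> snd p \<noteq> {}}.
       INF x \<in> {x \<in> (\<Inter>t. edom (ft t)). \<forall>t\<in>snd p. ft t x \<le> ereal (fst p)}. f x)"
proof -
  interpret convex_program f ft
    using f_cvx f_prop ft_cvx ft_prop by unfold_locales (auto simp: eproper_def)
  have "(SUP p \<in> {p. 0 < fst p \<and> finite (snd p) \<and> snd p \<noteq> {}}.
      relaxed_value f ft (fst p) (snd p)) \<le> dual_sup f ft"
    using alt by (intro SUP_least) (auto intro: relaxed_value_le_dual_sup)
  then have "dual_sup f ft =
    (SUP p \<in> {p. 0 < fst p \<and> finite (snd p) \<and> snd p \<noteq> {}}. relaxed_value f ft (fst p) (snd p))"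
    by (rule antisym[OF dual_sup_le_SUP_relaxed_value])
  then show ?thesis
    by (simp add: relaxed_value_def)
qed

end
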